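(* Let $n\geq 2$, let $\Omega\subset\mathbb{R}^n$ be a bounded open set, and let $u\in C^2(\Omega)\cap C(\overline\Omega)$ be the solution of $$\Delta u=-1\ \text{in }\Omega,\qquad u=0\ \text{on }\partial\Omega.$$ Let $M=\max_{\overline\Omega}u$. If $u$ satisfies property (A) in $\Omega$, i.e. $\Omega$ is convex and the function $w(x)=\sqrt{M-u(x)}$ is convex in $\Omega$, then $\Omega$ is an ellipsoid and $u$ is the torsion function of that ellipsoid, namely, in suitable Cartesian coordinates, $\Omega=E=\{x:\sum_{i=1}^n a_i(x_i-\bar x_i)^2<R^2\}$ with $a_i>0$, $\sum_{i=1}^n a_i=n$, and $u(x)=u_E(x)=\frac{R^2-\sum_{i=1}^n a_i(x_i-\bar x_i)^2}{2n}$.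
   Context: The solution $u$ of $\Delta u=-1$ in $\Omega$, $u=0$ on $\partial\Omega$ is called the torsion function of $\Omega$. For a bounded convex open set $\Omega$, a function $v\in C(\overline\Omega)$ is said to satisfy property (A) in $\Omega$ if $\sqrt{M-v(x)}$ is convex in $\Omega$, where $M=\max_{\overline\Omega}v$. *)

theory Defs
  imports "HOL-Analysis.Analysis"
begin

definition C2_on :: "(real^'n) set \<Rightarrow> (real^'n \<Rightarrow> real) \<Rightarrow> bool" where
  "C2_on S f \<longleftrightarrow>
     (\<exists>Df :: (real^'n) \<Rightarrow> ((real^'n) \<Rightarrow>\<^sub>L real).
      \<exists>D2f :: (real^'n) \<Rightarrow> ((real^'n) \<Rightarrow>\<^sub>L ((real^'n) \<Rightarrow>\<^sub>L real)).
        (\<forall>x\<in>S. (f has_derivative blinfun_apply (Df x)) (at x)) \<and>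
        (\<forall>x\<in>S. (Df has_derivative blinfun_apply (D2f x)) (at x)) \<and>
        continuous_on S D2f)"

definition partial2 :: "'n::finite \<Rightarrow> (real^'n \<Rightarrow> real) \<Rightarrow> real^'n \<Rightarrow> real" where
  "partial2 i f x =
     frechet_derivative (\<lambda>y. frechet_derivative f (at y) (axis i 1)) (at x) (axis i 1)"

definition laplacian :: "(real^'n \<Rightarrow> real) \<Rightarrow> real^'n \<Rightarrow> real" where
  "laplacian f x = (\<Sum>i\<in>UNIV. partial2 i f x)"

end

theory Submission
  imports Defs
begin

text \<open>
  Let \<open>x\<^sub>0\<close> be the interior maximum point of \<open>u\<close>, \<open>M = u x\<^sub>0\<close>. Along every segment from \<open>x\<^sub>0\<close>
  the convex function \<open>\<surd>(M - u)\<close> starts at \<open>0\<close>, hence grows at most linearly; squaring, the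
  quadratic part of Taylor's formula at \<open>x\<^sub>0\<close> yields \<open>q(x - x\<^sub>0) \<le> M - u(x)\<close> with
  \<open>q(v) = -D\<^sup>2u(x\<^sub>0)(v,v)/2\<close>. Since \<open>\<Delta>u = -1\<close>, the trace of \<open>q\<close> is \<open>1/2\<close>, so
  \<open>h = M - q(x - x\<^sub>0) - u\<close> is a nonnegative harmonic function vanishing at \<open>x\<^sub>0\<close>. By the strong
  minimum principle (proved via Hopf's lemma) \<open>h = 0\<close>, i.e. \<open>u = M - q(x - x\<^sub>0)\<close>. The boundary
  condition makes \<open>\<partial>\<Omega>\<close> the level set \<open>q = M\<close>, so the convex set \<open>\<Omega>\<close> is the ellipsoid
  \<open>q(x - x\<^sub>0) < M\<close>; diagonalising \<open>q\<close> gives the coordinates of the statement.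
\<close>

lemma continuous_on_compact_pos_lower_bound:
  fixes h :: "'a::topological_space \<Rightarrow> real"
  assumes "compact K" "continuous_on K h" "\<forall>x\<in>K. 0 < h x"
  obtains m where "m > 0" "\<forall>x\<in>K. m \<le> h x"
proof (cases "K = {}")
  case False
  then obtain q where "q \<in> K" "\<forall>x\<in>K. h q \<le> h x"
    using continuous_attains_inf[OF assms(1)] assms(2) by blast
  then show ?thesis using that[of "h q"] assms(3) by blast
qed (use that[of 1] in auto)

lemma continuous_on_closure_eq:
  fixes f g :: "'a::topological_space \<Rightarrow> 'b::real_normed_vector"
  assumes "continuous_on (closure S) f" "continuous_on (closure S) g" "\<forall>x\<in>S. f x = g x"
  shows "\<forall>x\<in>closure S. f x = g x"
proof -
  have "closed {x \<in> closure S. f x - g x = 0}"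
    by (rule continuous_closed_preimage_constant[OF continuous_on_diff[OF assms(1,2)]]) simp
  then have "closure S \<subseteq> {x \<in> closure S. f x - g x = 0}"
    using assms(3) closure_subset by (intro closure_minimal) auto
  then show ?thesis by auto
qed

section \<open>Second derivatives along segments\<close>

text \<open>Unlike in \<open>C2_on\<close>, the derivatives are plain curried functions, so that sums, multiples
  and explicit formulas (the Hopf barrier, quadratic forms) can be combined freely.\<close>

definition C2_derivs ::
  "'a::real_normed_vector set \<Rightarrow> ('a \<Rightarrow> real) \<Rightarrow> ('a \<Rightarrow> 'a \<Rightarrow> real) \<Rightarrow> ('a \<Rightarrow> 'a \<Rightarrow> 'a \<Rightarrow> real) \<Rightarrow> bool"
where
  "C2_derivs U f Df D2f \<longleftrightarrow>
     (\<forall>y\<in>U. (f has_derivative Df y) (at y)) \<and>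
     (\<forall>y\<in>U. \<forall>v. ((\<lambda>z. Df z v) has_derivative (\<lambda>k. D2f y k v)) (at y)) \<and>
     (\<forall>v. continuous_on U (\<lambda>y. D2f y v v))"

lemma C2_derivs_subset: "C2_derivs U f Df D2f \<Longrightarrow> V \<subseteq> U \<Longrightarrow> C2_derivs V f Df D2f"
  unfolding C2_derivs_def by (auto intro: continuous_on_subset)

lemma C2_derivs_diff:
  assumes "C2_derivs U f Df D2f" "C2_derivs U g Dg D2g"
  shows "C2_derivs U (\<lambda>x. f x - g x) (\<lambda>y k. Df y k - Dg y k) (\<lambda>y k v. D2f y k v - D2g y k v)"
  using assms unfolding C2_derivs_def by (auto intro!: derivative_eq_intros continuous_intros)

lemma C2_derivs_cmult:
  assumes "C2_derivs U f Df D2f"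
  shows "C2_derivs U (\<lambda>x. c * f x) (\<lambda>y k. c * Df y k) (\<lambda>y k v. c * D2f y k v)"
  using assms unfolding C2_derivs_def by (auto intro!: derivative_eq_intros continuous_intros)

lemma C2_derivs_const: "C2_derivs U (\<lambda>x. c) (\<lambda>y k. 0) (\<lambda>y k v. 0)"
  unfolding C2_derivs_def by (auto intro!: derivative_eq_intros continuous_intros)

lemma C2_derivs_continuous_on: "C2_derivs U f Df D2f \<Longrightarrow> continuous_on U f"
  unfolding C2_derivs_def by (meson continuous_at_imp_continuous_on has_derivative_continuous)

lemma C2_derivs_directional_derivative:
  assumes "C2_derivs U f Df D2f" "x \<in> U"
  shows "((\<lambda>t. f (x + t *\<^sub>R w)) has_real_derivative Df x w) (at 0)"
proof -
  have dx: "(f has_derivative Df x) (at (x + 0 *\<^sub>R w))" using assms by (simp add: C2_derivs_def)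
  have "((\<lambda>t::real. x + t *\<^sub>R w) has_derivative (\<lambda>s. s *\<^sub>R w)) (at 0)"
    by (auto intro!: derivative_eq_intros)
  from has_derivative_compose[OF this dx]
  show ?thesis
    by (rule has_derivative_imp_has_field_derivative) (simp add: linear_scale[OF has_derivative_linear[OF dx]])
qed

lemma C2_derivs_taylor:
  assumes c: "C2_derivs U f Df D2f" and h: "0 < h"
    and seg: "\<And>t. 0 \<le> t \<Longrightarrow> t \<le> h \<Longrightarrow> x + t *\<^sub>R w \<in> U"
  obtains \<tau> where "0 < \<tau>" "\<tau> < h"
    "f (x + h *\<^sub>R w) = f x + h * Df x w + D2f (x + \<tau> *\<^sub>R w) w w / 2 * h^2"
proof -
  define diff where "diff = (\<lambda>m::nat. if m = 0 then (\<lambda>t. f (x + t *\<^sub>R w))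
     else if m = 1 then (\<lambda>t. Df (x + t *\<^sub>R w) w) else (\<lambda>t. D2f (x + t *\<^sub>R w) w w))"
  have line: "((\<lambda>t::real. x + t *\<^sub>R w) has_derivative (\<lambda>s. s *\<^sub>R w)) (at t)" for t
    by (auto intro!: derivative_eq_intros)
  have D: "DERIV (diff m) t :> diff (Suc m) t" if "m < 2" "0 \<le> t" "t \<le> h" for m t
  proof -
    have U: "x + t *\<^sub>R w \<in> U" using seg that by auto
    show ?thesis
    proof (cases "m = 0")
      case True
      have d: "(f has_derivative Df (x + t *\<^sub>R w)) (at (x + t *\<^sub>R w))"
        using c U by (auto simp: C2_derivs_def)
      have "((\<lambda>t. f (x + t *\<^sub>R w)) has_derivative (\<lambda>s. Df (x + t *\<^sub>R w) (s *\<^sub>R w))) (at t)"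
        by (rule has_derivative_compose[OF line d])
      then show ?thesis using True linear_scale[OF has_derivative_linear[OF d]]
        by (auto simp: diff_def intro!: has_derivative_imp_has_field_derivative)
    next
      case False
      then have m1: "m = 1" using that by auto
      have d: "((\<lambda>z. Df z w) has_derivative (\<lambda>k. D2f (x + t *\<^sub>R w) k w)) (at (x + t *\<^sub>R w))"
        using c U by (auto simp: C2_derivs_def)
      have "((\<lambda>t. Df (x + t *\<^sub>R w) w) has_derivative (\<lambda>s. D2f (x + t *\<^sub>R w) (s *\<^sub>R w) w)) (at t)"
        by (rule has_derivative_compose[OF line d])
      then show ?thesis using m1 linear_scale[OF has_derivative_linear[OF d]]
        by (auto simp: diff_def intro!: has_derivative_imp_has_field_derivative)
    qed
  qed
  obtain \<tau> where "0 < \<tau>" "\<tau> < h"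
    and "diff 0 h = (\<Sum>m<2. diff m 0 / fact m * h ^ m) + diff 2 \<tau> / fact 2 * h ^ 2"
    using Maclaurin[OF h _ refl, of 2 diff] D by auto
  moreover have "(\<Sum>m<2. diff m 0 / fact m * h ^ m) = f x + h * Df x w"
    by (simp add: diff_def numeral_2_eq_2)
  ultimately show ?thesis using that by (auto simp: diff_def)
qed

lemma C2_derivs_second_deriv_lower:
  assumes c: "C2_derivs U f Df D2f" and x: "x \<in> U" and h: "0 < h"
    and seg: "\<And>t. 0 \<le> t \<Longrightarrow> t \<le> h \<Longrightarrow> x + t *\<^sub>R v \<in> U"
    and bd: "\<And>t. 0 < t \<Longrightarrow> t \<le> h \<Longrightarrow> t^2 * K \<le> f (x + t *\<^sub>R v) - f x - t * Df x v"
  shows "K \<le> D2f x v v / 2"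
proof (rule ccontr)
  assume "\<not> ?thesis"
  then have "0 < 2 * K - D2f x v v" by simp
  moreover have "continuous_on U (\<lambda>y. D2f y v v)" using c by (auto simp: C2_derivs_def)
  ultimately obtain \<delta> where \<delta>: "\<delta> > 0"
    and near: "\<forall>y\<in>U. dist y x < \<delta> \<longrightarrow> dist (D2f y v v) (D2f x v v) < 2 * K - D2f x v v"
    using x unfolding continuous_on_iff by blast
  define t where "t = min h (\<delta> / (2 * (norm v + 1)))"
  have nv: "norm v + 1 > 0" by (simp add: add_nonneg_pos)
  have t: "0 < t" "t \<le> h" using \<delta> h nv by (auto simp: t_def)
  have "t * norm v \<le> \<delta> / (2 * (norm v + 1)) * (norm v + 1)"
    using t nv by (intro mult_mono) (auto simp: t_def)
  also have "\<dots> = \<delta> / 2" using nv by (simp add: field_simps)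
  also have "\<dots> < \<delta>" using \<delta> by simp
  finally have tv: "t * norm v < \<delta>" .
  obtain \<tau> where \<tau>: "0 < \<tau>" "\<tau> < t"
    and eq: "f (x + t *\<^sub>R v) = f x + t * Df x v + D2f (x + \<tau> *\<^sub>R v) v v / 2 * t^2"
    using C2_derivs_taylor[OF c t(1)] seg t by (metis order.trans)
  have "dist (x + \<tau> *\<^sub>R v) x \<le> t * norm v"
    using \<tau> by (simp add: dist_norm mult_right_mono)
  then have "D2f (x + \<tau> *\<^sub>R v) v v < 2 * K"
    using near seg[of \<tau>] \<tau> t tv by (auto simp: dist_real_def)
  then have "D2f (x + \<tau> *\<^sub>R v) v v / 2 * t^2 < t^2 * K" using t by simp
  then show False using bd[OF t] eq by simp
qed

lemma C2_derivs_second_deriv_nonneg_at_min: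
  assumes c: "C2_derivs U f Df D2f" and U: "open U" and x: "x \<in> U"
    and min: "\<forall>y\<in>U. f x \<le> f y"
  shows "0 \<le> D2f x v v"
proof -
  have "Df x = (\<lambda>v. 0)"
    using differential_zero_maxmin[OF x U] c x min by (auto simp: C2_derivs_def)
  obtain r where r: "r > 0" "ball x r \<subseteq> U" using U x open_contains_ball by blast
  define h where "h = r / (2 * (norm v + 1))"
  have nv: "norm v + 1 > 0" by (simp add: add_nonneg_pos)
  have h: "h > 0" using r nv by (simp add: h_def)
  have "h * norm v < r"
  proof -
    have "h * norm v \<le> h * (norm v + 1)" using h by simp
    also have "\<dots> = r / 2" using nv by (simp add: h_def field_simps)
    also have "\<dots> < r" using r by simp
    finally show ?thesis .
  qed
  then have seg: "x + t *\<^sub>R v \<in> U" if "0 \<le> t" "t \<le> h" for t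
    using r that mult_right_mono[OF that(2) norm_ge_zero[of v]] by (auto simp: dist_norm)
  have "0 \<le> D2f x v v / 2"
    by (rule C2_derivs_second_deriv_lower[OF c x h seg]) (use min seg \<open>Df x = _\<close> in auto)
  then show ?thesis by simp
qed

definition hess_trace :: "(real^'n \<Rightarrow> real^'n \<Rightarrow> real^'n \<Rightarrow> real) \<Rightarrow> real^'n \<Rightarrow> real" where
  "hess_trace D2f x = (\<Sum>i\<in>UNIV. D2f x (axis i 1) (axis i 1))"

lemma hess_trace_nonneg_at_min:
  "C2_derivs U f Df D2f \<Longrightarrow> open U \<Longrightarrow> x \<in> U \<Longrightarrow> \<forall>y\<in>U. f x \<le> f y \<Longrightarrow> 0 \<le> hess_trace D2f x"
  unfolding hess_trace_def by (intro sum_nonneg C2_derivs_second_deriv_nonneg_at_min)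

lemma C2_on_imp_C2_derivs:
  fixes u :: "real^'n \<Rightarrow> real"
  assumes "C2_on S u"
  obtains Du :: "real^'n \<Rightarrow> ((real^'n) \<Rightarrow>\<^sub>L real)" and D2u
  where "C2_derivs S u (\<lambda>y. blinfun_apply (Du y)) (\<lambda>y k v. blinfun_apply (blinfun_apply (D2u y) k) v)"
    and "\<forall>x\<in>S. (u has_derivative blinfun_apply (Du x)) (at x)"
    and "\<forall>x\<in>S. (Du has_derivative blinfun_apply (D2u x)) (at x)"
proof -
  obtain Du :: "real^'n \<Rightarrow> ((real^'n) \<Rightarrow>\<^sub>L real)" and D2u where
    d1: "\<forall>x\<in>S. (u has_derivative blinfun_apply (Du x)) (at x)" and
    d2: "\<forall>x\<in>S. (Du has_derivative blinfun_apply (D2u x)) (at x)" and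
    ct: "continuous_on S D2u"
    using assms unfolding C2_on_def by blast
  have "C2_derivs S u (\<lambda>y. blinfun_apply (Du y)) (\<lambda>y k v. blinfun_apply (blinfun_apply (D2u y) k) v)"
    unfolding C2_derivs_def
    using d1 blinfun.FDERIV[OF d2[rule_format] has_derivative_const]
    by (auto intro!: blinfun.continuous_on ct continuous_on_const)
  then show ?thesis using that d1 d2 by blast
qed

lemma laplacian_eq_hess_trace:
  fixes u :: "real^'n \<Rightarrow> real"
  assumes S: "open S" and x: "x \<in> S"
    and d1: "\<forall>x\<in>S. (u has_derivative blinfun_apply (Du x)) (at x)"
    and d2: "\<forall>x\<in>S. (Du has_derivative blinfun_apply (D2u x)) (at x)"
  shows "laplacian u x = hess_trace (\<lambda>y k v. blinfun_apply (blinfun_apply (D2u y) k) v) x"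
  unfolding laplacian_def hess_trace_def
proof (rule sum.cong[OF refl])
  fix i :: 'n
  have "frechet_derivative u (at y) = blinfun_apply (Du y)" if "y \<in> S" for y
    using frechet_derivative_at d1 that by metis
  moreover have "((\<lambda>z. blinfun_apply (Du z) (axis i 1)) has_derivative
      (\<lambda>k. blinfun_apply (blinfun_apply (D2u x) k) (axis i 1))) (at x)"
    using blinfun.FDERIV[OF d2[rule_format, OF x] has_derivative_const] by simp
  ultimately have "((\<lambda>y. frechet_derivative u (at y) (axis i 1)) has_derivative
      (\<lambda>k. blinfun_apply (blinfun_apply (D2u x) k) (axis i 1))) (at x)"
    using has_derivative_transform_within_open[OF _ S x] by (metis (no_types, lifting))
  then show "partial2 i u x = blinfun_apply (blinfun_apply (D2u x) (axis i 1)) (axis i 1)"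
    unfolding partial2_def using frechet_derivative_at by metis
qed

section \<open>Hopf's lemma and the strong minimum principle\<close>

lemma strictly_superharmonic_min_principle:
  fixes k :: "real^'n \<Rightarrow> real"
  assumes c: "C2_derivs U k Dk D2k" and A: "open A" "bounded A" "closure A \<subseteq> U"
    and super: "\<forall>x\<in>A. hess_trace D2k x < 0" and bd: "\<forall>x\<in>frontier A. 0 \<le> k x"
  shows "\<forall>x\<in>A. 0 \<le> k x"
proof (rule ccontr)
  assume "\<not> ?thesis"
  then obtain p where p: "p \<in> A" "k p < 0" by (auto simp: not_le)
  have "continuous_on (closure A) k"
    using C2_derivs_continuous_on[OF c] A(3) by (rule continuous_on_subset)
  moreover have "closure A \<noteq> {}" using p closure_subset by blast
  ultimately obtain q where q: "q \<in> closure A" "\<forall>x\<in>closure A. k q \<le> k x"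
    using continuous_attains_inf[OF compact_closure[THEN iffD2, OF A(2)]] by blast
  have "k q \<le> k p" using q(2) p(1) closure_subset by blast
  then have kq: "k q < 0" using p(2) by linarith
  show False
  proof (cases "q \<in> A")
    case True
    have "C2_derivs A k Dk D2k" using C2_derivs_subset[OF c] A(3) closure_subset by blast
    then have "0 \<le> hess_trace D2k q"
      using hess_trace_nonneg_at_min[OF _ A(1) True] q closure_subset by blast
    then show False using super True by (simp add: not_less[symmetric])
  next
    case False
    then have "q \<in> frontier A" using q A(1) by (simp add: frontier_def interior_open)
    then show False using bd kq by (simp add: not_le[symmetric])
  qed
qed

text \<open>The coefficient \<open>n/d\<^sup>2\<close> of the barrier makes it strictly subharmonic on the annulus
  where \<open>|x - y|\<^sup>2 > (n+1)/(n+2) d\<^sup>2\<close>.\<close>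

definition hopf_barrier :: "real \<Rightarrow> real^'n \<Rightarrow> real^'n \<Rightarrow> real" where
  "hopf_barrier d y x =
     (d^2 - (x-y)\<bullet>(x-y)) + real CARD('n) / d^2 * (d^2 - (x-y)\<bullet>(x-y))^2"

definition hopf_annulus :: "real \<Rightarrow> real^'n \<Rightarrow> (real^'n) set" where
  "hopf_annulus d y =
     {x. (real CARD('n) + 1) / (real CARD('n) + 2) * d^2 < (x-y)\<bullet>(x-y) \<and> (x-y)\<bullet>(x-y) < d^2}"

lemma hopf_barrier_strictly_subharmonic:
  fixes y :: "real^'n"
  assumes d: "d > 0"
  obtains Dv D2v where "C2_derivs U (hopf_barrier d y) Dv D2v"
    and "\<forall>x\<in>hopf_annulus d y. 0 < hess_trace D2v x"
proof -
  define N where "N = real CARD('n)"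
  define \<beta> where "\<beta> = N / d^2"
  have N: "N > 0" by (simp add: N_def)
  have \<beta>: "\<beta> * d^2 = N" using d by (simp add: \<beta>_def)
  define D2v where "D2v = (\<lambda>x k w. 8*\<beta>*((x-y)\<bullet>k)*((x-y)\<bullet>w) - 2*(1 + 2*\<beta>*(d^2 - (x-y)\<bullet>(x-y)))*(k\<bullet>w))"
  have v: "hopf_barrier d y = (\<lambda>x. (d^2 - (x-y)\<bullet>(x-y)) + \<beta> * (d^2 - (x-y)\<bullet>(x-y))^2)"
    by (simp add: fun_eq_iff hopf_barrier_def \<beta>_def N_def)
  have "C2_derivs U (hopf_barrier d y) (\<lambda>x k. - (1 + 2*\<beta>*(d^2 - (x-y)\<bullet>(x-y))) * (2 * ((x-y)\<bullet>k))) D2v"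
    unfolding C2_derivs_def v D2v_def
    by (intro conjI ballI allI) (auto intro!: derivative_eq_intros continuous_intros
        simp: inner_commute algebra_simps power2_eq_square)
  moreover have "0 < hess_trace D2v x" if x: "x \<in> hopf_annulus d y" for x
  proof -
    define s where "s = (x-y)\<bullet>(x-y)"
    have ax: "(x-y) \<bullet> axis i 1 = (x-y) $ i" for i by (simp add: inner_axis)
    have "(\<Sum>i\<in>UNIV. ((x-y) \<bullet> axis i 1) * ((x-y) \<bullet> axis i 1)) = s"
      unfolding ax by (simp add: inner_vec_def s_def)
    then have tr: "hess_trace D2v x = 8 * \<beta> * s - 2 * N * (1 + 2*\<beta>*(d^2 - s))"
      by (simp add: hess_trace_def D2v_def sum_subtractf sum_distrib_left[symmetric] mult.assoc
          inner_axis_axis N_def s_def)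
    have "N * (N+1) / (N+2) = \<beta> * ((N+1) / (N+2) * d^2)"
      using \<beta> by (simp add: mult_ac)
    also have "\<dots> < \<beta> * s"
      using x d N by (intro mult_strict_left_mono) (auto simp: hopf_annulus_def N_def s_def \<beta>_def)
    finally have "N * (N+1) / (N+2) < \<beta> * s" .
    then have "N^2 + N < (N+2) * (\<beta> * s)" using N by (simp add: field_simps power2_eq_square)
    moreover have "8 * \<beta> * s - 2 * N * (1 + 2*\<beta>*(d^2 - s)) = 4 * ((N+2) * (\<beta> * s)) - 2*N - 4*N^2"
      using \<beta> by (simp add: algebra_simps power2_eq_square)
    ultimately show ?thesis using N unfolding tr by linarith
  qed
  ultimately show ?thesis using that by blast
qed

lemma hopf_annulus_topology:
  fixes y :: "real^'n"
  assumes d: "d > 0"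
  shows "open (hopf_annulus d y)" "closure (hopf_annulus d y) \<subseteq> cball y d"
    and "frontier (hopf_annulus d y) \<subseteq>
      {x. (x-y)\<bullet>(x-y) = (real CARD('n) + 1) / (real CARD('n) + 2) * d^2} \<union> sphere y d"
proof -
  define s0 where "s0 = (real CARD('n) + 1) / (real CARD('n) + 2) * d^2"
  have s_cont: "continuous_on S (\<lambda>x. (x-y)\<bullet>(x-y))" for S by (intro continuous_intros)
  have s_dist: "(x-y)\<bullet>(x-y) = (dist x y)^2" for x by (simp add: dist_norm power2_norm_eq_inner)
  have A: "hopf_annulus d y = {x. s0 < (x-y)\<bullet>(x-y)} \<inter> {x. (x-y)\<bullet>(x-y) < d^2}"
    by (auto simp: hopf_annulus_def s0_def)
  show oA: "open (hopf_annulus d y)" unfolding A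
    by (intro open_Int open_Collect_less s_cont continuous_on_const)
  have cl: "closure (hopf_annulus d y) \<subseteq> {x. s0 \<le> (x-y)\<bullet>(x-y)} \<inter> {x. (x-y)\<bullet>(x-y) \<le> d^2}"
    by (rule closure_minimal) (auto simp: A intro!: closed_Int closed_Collect_le s_cont continuous_on_const)
  moreover have "(x-y)\<bullet>(x-y) \<le> d^2 \<Longrightarrow> x \<in> cball y d" for x
    using d by (auto simp: s_dist dist_commute intro: power2_le_imp_le)
  ultimately show "closure (hopf_annulus d y) \<subseteq> cball y d" by blast
  show "frontier (hopf_annulus d y) \<subseteq> {x. (x-y)\<bullet>(x-y) = s0} \<union> sphere y d"
  proof
    fix x assume "x \<in> frontier (hopf_annulus d y)"
    then have "x \<in> closure (hopf_annulus d y)" "x \<notin> hopf_annulus d y"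
      using oA by (auto simp: frontier_def interior_open)
    then have "(x-y)\<bullet>(x-y) = s0 \<or> (x-y)\<bullet>(x-y) = d^2"
      using cl by (force simp: hopf_annulus_def s0_def)
    then show "x \<in> {x. (x-y)\<bullet>(x-y) = s0} \<union> sphere y d"
      using d by (auto simp: s_dist dist_commute)
  qed
qed

lemma hopf_barrier_radial:
  fixes y :: "real^'n"
  assumes d: "d > 0" and z: "z \<in> sphere y d" and t: "0 < t" "t \<le> 1 / (4 * (real CARD('n) + 2))"
  shows "z + t *\<^sub>R (y - z) \<in> hopf_annulus d y" "d^2 * t \<le> hopf_barrier d y (z + t *\<^sub>R (y - z))"
proof -
  define N where "N = real CARD('n)"
  have N: "N > 0" by (simp add: N_def)
  have "z + t *\<^sub>R (y - z) - y = (1 - t) *\<^sub>R (z - y)" by (simp add: algebra_simps)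
  then have s: "(z + t *\<^sub>R (y - z) - y) \<bullet> (z + t *\<^sub>R (y - z) - y) = (1 - t)^2 * d^2"
    using z by (simp add: power2_norm_eq_inner[symmetric] dist_norm power_mult_distrib norm_minus_commute)
  have t': "t \<le> 1 / (4 * (N+2))" using t by (simp add: N_def)
  also have "\<dots> < 1/2" using N by (simp add: field_simps)
  finally have t2: "t < 1/2" .
  have "(N+1) / (N+2) = 1 - 1 / (N+2)" using N by (simp add: field_simps)
  also have "\<dots> < 1 - 2 * t" using t' N by (simp add: field_simps)
  also have "\<dots> \<le> (1 - t)^2" by (simp add: power2_eq_square algebra_simps)
  finally have "(N+1) / (N+2) * d^2 < (1 - t)^2 * d^2" using d by (intro mult_strict_right_mono) auto
  moreover have "(1 - t)^2 < 1" using t t2 by (simp add: power2_eq_square algebra_simps)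
  then have "(1 - t)^2 * d^2 < d^2" using d by simp
  ultimately show "z + t *\<^sub>R (y - z) \<in> hopf_annulus d y"
    using s by (simp add: hopf_annulus_def N_def)
  have "d^2 * t \<le> d^2 * (2*t - t^2)" using t t2 d by (intro mult_left_mono) (auto simp: power2_eq_square)
  also have "\<dots> = d^2 - (1 - t)^2 * d^2" by (simp add: power2_eq_square algebra_simps)
  also have "\<dots> \<le> hopf_barrier d y (z + t *\<^sub>R (y - z))"
    using s by (simp add: hopf_barrier_def)
  finally show "d^2 * t \<le> hopf_barrier d y (z + t *\<^sub>R (y - z))" .
qed

lemma hopf_barrier_comparison:
  fixes h :: "real^'n \<Rightarrow> real"
  assumes c: "C2_derivs U h Dh D2h" and super: "\<forall>x\<in>U. hess_trace D2h x \<le> 0"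
    and d: "d > 0" and cb: "cball y d \<subseteq> U" and \<epsilon>: "\<epsilon> > 0"
    and fr: "\<forall>x\<in>frontier (hopf_annulus d y). \<epsilon> * hopf_barrier d y x \<le> h x"
  shows "\<forall>x\<in>hopf_annulus d y. \<epsilon> * hopf_barrier d y x \<le> h x"
proof -
  obtain Dv D2v where cv: "C2_derivs U (hopf_barrier d y) Dv D2v"
    and trv: "\<forall>x\<in>hopf_annulus d y. 0 < hess_trace D2v x"
    using hopf_barrier_strictly_subharmonic[OF d] by blast
  have A: "open (hopf_annulus d y)" "closure (hopf_annulus d y) \<subseteq> U"
    using hopf_annulus_topology[where y=y, OF d] cb by auto
  have "\<forall>x\<in>hopf_annulus d y. 0 \<le> h x - \<epsilon> * hopf_barrier d y x"
  proof (rule strictly_superharmonic_min_principle[OF C2_derivs_diff[OF c C2_derivs_cmult[OF cv]] A(1) _ A(2)])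
    show "bounded (hopf_annulus d y)"
      using hopf_annulus_topology(2)[where y=y, OF d] closure_subset
      by (meson bounded_cball bounded_subset order.trans)
    show "\<forall>x\<in>hopf_annulus d y. hess_trace (\<lambda>y k v. D2h y k v - \<epsilon> * D2v y k v) x < 0"
    proof
      fix x assume x: "x \<in> hopf_annulus d y"
      then have "x \<in> U" using A(2) closure_subset by blast
      then have "hess_trace D2h x \<le> 0" "0 < \<epsilon> * hess_trace D2v x" using super trv x \<epsilon> by auto
      moreover have "hess_trace (\<lambda>y k v. D2h y k v - \<epsilon> * D2v y k v) x
          = hess_trace D2h x - \<epsilon> * hess_trace D2v x"
        by (simp add: hess_trace_def sum_subtractf sum_distrib_left)
      ultimately show "hess_trace (\<lambda>y k v. D2h y k v - \<epsilon> * D2v y k v) x < 0" by linarith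
    qed
  qed (use fr in simp)
  then show ?thesis by simp
qed

lemma hopf_barrier_frontier_bound:
  fixes h :: "real^'n \<Rightarrow> real"
  assumes c: "C2_derivs U h Dh D2h" and d: "d > 0" and cb: "cball y d \<subseteq> U"
    and pos: "\<forall>x\<in>ball y d. 0 < h x" and nn: "\<forall>x\<in>sphere y d. 0 \<le> h x"
  obtains \<epsilon> where "\<epsilon> > 0" "\<forall>x\<in>frontier (hopf_annulus d y). \<epsilon> * hopf_barrier d y x \<le> h x"
proof -
  define s0 where "s0 = (real CARD('n) + 1) / (real CARD('n) + 2) * d^2"
  define Si where "Si = {x. (x-y)\<bullet>(x-y) = s0}"
  have s_dist: "(x-y)\<bullet>(x-y) = (dist y x)^2" for x
    by (simp add: dist_norm power2_norm_eq_inner norm_minus_commute)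
  have s0: "s0 < d^2" using d by (simp add: s0_def field_simps)
  have SiB: "Si \<subseteq> ball y d"
    using s0 d power2_less_imp_less[of _ d] by (auto simp: Si_def s_dist)
  have "compact Si"
    using SiB unfolding compact_eq_bounded_closed Si_def
    by (auto intro!: closed_Collect_eq continuous_intros intro: bounded_subset)
  moreover have "continuous_on Si h"
    using C2_derivs_continuous_on[OF c] SiB cb ball_subset_cball by (meson continuous_on_subset order.trans)
  moreover have "\<forall>x\<in>Si. 0 < h x" using SiB pos by blast
  ultimately obtain m where m: "m > 0" "\<forall>x\<in>Si. m \<le> h x"
    by (rule continuous_on_compact_pos_lower_bound)
  define G0 where "G0 = (d^2 - s0) + real CARD('n) / d^2 * (d^2 - s0)^2"
  have G0: "G0 > 0" using s0 d by (simp add: G0_def add_pos_nonneg)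
  have "m / G0 * hopf_barrier d y x \<le> h x" if x: "x \<in> frontier (hopf_annulus d y)" for x
  proof -
    consider "x \<in> Si" | "x \<in> sphere y d"
      using x hopf_annulus_topology(3)[where y=y, OF d] by (auto simp: Si_def s0_def)
    then show ?thesis
    proof cases
      case 1
      then show ?thesis using m G0 by (simp add: Si_def hopf_barrier_def G0_def)
    next
      case 2
      then show ?thesis using nn by (simp add: hopf_barrier_def s_dist)
    qed
  qed
  then show ?thesis using that[of "m / G0"] m G0 by simp
qed

lemma hopf_lemma:
  fixes h :: "real^'n \<Rightarrow> real"
  assumes c: "C2_derivs U h Dh D2h" and super: "\<forall>x\<in>U. hess_trace D2h x \<le> 0"
    and d: "d > 0" and cb: "cball y d \<subseteq> U" and pos: "\<forall>x\<in>ball y d. 0 < h x"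
    and nn: "\<forall>x\<in>sphere y d. 0 \<le> h x" and z: "z \<in> sphere y d" and hz: "h z = 0"
  shows "0 < Dh z (y - z)"
proof -
  obtain \<epsilon> where \<epsilon>: "\<epsilon> > 0" and "\<forall>x\<in>frontier (hopf_annulus d y). \<epsilon> * hopf_barrier d y x \<le> h x"
    using hopf_barrier_frontier_bound[OF c d cb pos nn] by blast
  then have cmp: "\<forall>x\<in>hopf_annulus d y. \<epsilon> * hopf_barrier d y x \<le> h x"
    by (rule hopf_barrier_comparison[OF c super d cb])
  define T where "T = 1 / (4 * (real CARD('n) + 2))"
  have "\<epsilon> * d^2 \<le> (h (z + t *\<^sub>R (y - z)) - h z) / t" if "0 < t" "t < T" for t
  proof -
    have "\<epsilon> * (d^2 * t) \<le> h (z + t *\<^sub>R (y - z))"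
      using hopf_barrier_radial[OF d z, of t] cmp that \<epsilon> unfolding T_def
      by (smt (verit, best) mult_left_mono)
    then show ?thesis using that by (simp add: hz pos_le_divide_eq mult.assoc)
  qed
  then have "\<forall>\<^sub>F t in at_right 0. \<epsilon> * d^2 \<le> (h (z + t *\<^sub>R (y - z)) - h z) / t"
    unfolding eventually_at_right_field by (intro exI[of _ T]) (auto simp: T_def)
  moreover have "z \<in> U" using z cb by auto
  then have "((\<lambda>t. h (z + t *\<^sub>R (y - z))) has_real_derivative Dh z (y - z)) (at 0 within {0<..})"
    using has_field_derivative_at_within C2_derivs_directional_derivative[OF c] by blast
  then have "((\<lambda>t. (h (z + t *\<^sub>R (y - z)) - h z) / t) \<longlongrightarrow> Dh z (y - z)) (at_right 0)"
    by (simp add: has_field_derivative_iff)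
  ultimately have "\<epsilon> * d^2 \<le> Dh z (y - z)"
    using tendsto_lowerbound trivial_limit_at_right_real by blast
  then show ?thesis using \<epsilon> d by (smt (verit) mult_pos_pos zero_less_power)
qed

lemma connected_zero_set_limit_point:
  fixes h :: "'a::metric_space \<Rightarrow> real"
  assumes hc: "continuous_on U h" and U: "open U" and cU: "connected U"
    and nn: "\<forall>x\<in>U. 0 \<le> h x" and x0: "x0 \<in> U" "h x0 = 0" and p: "p \<in> U" "0 < h p"
  obtains z where "z \<in> U" "h z = 0" "\<And>r. r > 0 \<Longrightarrow> \<exists>x\<in>U. dist z x < r \<and> 0 < h x"
proof -
  define Z where "Z = {x\<in>U. h x = 0}"
  have "\<exists>z\<in>Z. \<forall>r>0. \<exists>x\<in>U. dist z x < r \<and> 0 < h x"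
  proof (rule ccontr)
    assume "\<not> ?thesis"
    then have loc: "\<forall>z\<in>Z. \<exists>r>0. \<forall>x\<in>U. dist z x < r \<longrightarrow> h x \<le> 0"
      by (metis not_less)
    have "open Z"
      unfolding open_contains_ball
    proof
      fix z assume z: "z \<in> Z"
      then obtain r where r: "r > 0" "\<forall>x\<in>U. dist z x < r \<longrightarrow> h x \<le> 0" using loc by blast
      have "z \<in> U" using z by (simp add: Z_def)
      then obtain e where e: "e > 0" "ball z e \<subseteq> U" using U open_contains_ball by blast
      have "ball z (min r e) \<subseteq> Z" using r e nn by (force simp: Z_def)
      then show "\<exists>e>0. ball z e \<subseteq> Z" using r e by (intro exI[of _ "min r e"]) auto
    qed
    moreover have "open (U \<inter> h -` {0<..})" by (rule continuous_open_preimage[OF hc U]) simp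
    moreover have "U \<subseteq> Z \<union> (U \<inter> h -` {0<..})" using nn by (force simp: Z_def)
    moreover have "Z \<inter> (U \<inter> h -` {0<..}) \<inter> U = {}" by (auto simp: Z_def)
    ultimately have "Z \<inter> U = {} \<or> (U \<inter> h -` {0<..}) \<inter> U = {}"
      using connectedD[OF cU] by blast
    then show False using x0 p by (auto simp: Z_def)
  qed
  then show ?thesis using that by (auto simp: Z_def)
qed

lemma ball_touching_zero_set:
  fixes h :: "'a::euclidean_space \<Rightarrow> real"
  assumes hc: "continuous_on U h" and U: "open U" and nn: "\<forall>x\<in>U. 0 \<le> h x"
    and z0: "z0 \<in> U" "h z0 = 0" and near: "\<And>r. r > 0 \<Longrightarrow> \<exists>x\<in>U. dist z0 x < r \<and> 0 < h x"
  obtains y d z where "d > 0" "cball y d \<subseteq> U" "\<forall>x\<in>ball y d. 0 < h x" "z \<in> sphere y d" "h z = 0"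
proof -
  obtain e where e: "e > 0" "ball z0 e \<subseteq> U" using U z0 open_contains_ball by blast
  obtain y where y: "y \<in> U" "dist z0 y < e / 3" "0 < h y" using near e by (meson zero_less_divide_iff zero_less_numeral)
  define \<rho> where "\<rho> = dist y z0"
  have cb\<rho>: "cball y \<rho> \<subseteq> U"
  proof
    fix x assume "x \<in> cball y \<rho>"
    then have "dist y x \<le> dist z0 y" by (simp add: \<rho>_def dist_commute)
    then have "dist z0 x < e" using y(2) e(1) dist_triangle[of z0 x y] by linarith
    then show "x \<in> U" using e by auto
  qed
  define K where "K = {x \<in> cball y \<rho>. h x = 0}"
  have "closed K" unfolding K_def
    by (rule continuous_closed_preimage_constant[OF continuous_on_subset[OF hc cb\<rho>] closed_cball])
  moreover have "z0 \<in> K" using z0 by (simp add: K_def \<rho>_def dist_commute)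
  ultimately obtain z where zK: "z \<in> K" and zmin: "\<And>x. x \<in> K \<Longrightarrow> dist y z \<le> dist y x"
    using distance_attains_inf by blast
  define d where "d = dist y z"
  have "d \<le> \<rho>" using zmin[OF \<open>z0 \<in> K\<close>] by (simp add: d_def \<rho>_def dist_commute)
  have "0 < h x" if x: "x \<in> ball y d" for x
  proof (rule ccontr)
    assume "\<not> 0 < h x"
    moreover have "x \<in> cball y \<rho>" using x \<open>d \<le> \<rho>\<close> by simp
    ultimately have "x \<in> K" using nn cb\<rho> by (force simp: K_def)
    then show False using zmin x by (fastforce simp: d_def)
  qed
  moreover have "d > 0" using zK y by (auto simp: K_def d_def)
  moreover have "cball y d \<subseteq> U" using \<open>d \<le> \<rho>\<close> cb\<rho> by auto
  ultimately show ?thesis using that[of d y z] zK by (auto simp: K_def d_def)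
qed

lemma superharmonic_strong_min_principle:
  fixes h :: "real^'n \<Rightarrow> real"
  assumes c: "C2_derivs U h Dh D2h" and U: "open U" and cU: "connected U"
    and super: "\<forall>x\<in>U. hess_trace D2h x \<le> 0" and nn: "\<forall>x\<in>U. 0 \<le> h x"
    and x0: "x0 \<in> U" "h x0 = 0"
  shows "\<forall>x\<in>U. h x = 0"
proof (rule ccontr)
  assume "\<not> ?thesis"
  then obtain p where "p \<in> U" "0 < h p" using nn by (metis less_eq_real_def)
  with connected_zero_set_limit_point[OF C2_derivs_continuous_on[OF c] U cU nn x0]
  obtain z0 where "z0 \<in> U" "h z0 = 0" "\<And>r. r > 0 \<Longrightarrow> \<exists>x\<in>U. dist z0 x < r \<and> 0 < h x"
    by blast
  with ball_touching_zero_set[OF C2_derivs_continuous_on[OF c] U nn]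
  obtain y d z where yd: "d > 0" "cball y d \<subseteq> U" "\<forall>x\<in>ball y d. 0 < h x"
    and z: "z \<in> sphere y d" "h z = 0"
    by metis
  have "z \<in> U" using z yd by auto
  then have "Dh z = (\<lambda>v. 0)"
    using differential_zero_maxmin[OF _ U] c nn z by (auto simp: C2_derivs_def)
  moreover have "\<forall>x\<in>sphere y d. 0 \<le> h x" using nn yd(2) by auto
  then have "0 < Dh z (y - z)" using hopf_lemma[OF c super yd] z by blast
  ultimately show False by simp
qed

section \<open>Symmetric bilinear forms\<close>

lemma coordinates_orthogonal_transformation:
  fixes \<sigma> :: "'n::finite \<Rightarrow> real^'m"
  assumes bij: "bij_betw \<sigma> UNIV S" and expand: "\<And>y. (\<Sum>b\<in>S. (y \<bullet> b) *\<^sub>R b) = y"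
  shows "orthogonal_transformation (\<lambda>y. \<chi> k. \<sigma> k \<bullet> y)"
proof -
  have "(\<chi> k. \<sigma> k \<bullet> y) \<bullet> (\<chi> k. \<sigma> k \<bullet> y) = y \<bullet> y" for y
  proof -
    have "(\<chi> k. \<sigma> k \<bullet> y) \<bullet> (\<chi> k. \<sigma> k \<bullet> y) = (\<Sum>k\<in>UNIV. (\<lambda>b. (b \<bullet> y)^2) (\<sigma> k))"
      by (simp add: inner_vec_def power2_eq_square)
    also have "\<dots> = (\<Sum>b\<in>S. (b \<bullet> y)^2)" by (rule sum.reindex_bij_betw[OF bij])
    also have "\<dots> = y \<bullet> (\<Sum>b\<in>S. (y \<bullet> b) *\<^sub>R b)"
      by (simp add: inner_sum_right power2_eq_square inner_commute)
    finally show ?thesis using expand by simp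
  qed
  moreover have "linear (\<lambda>y. \<chi> k. \<sigma> k \<bullet> y)" by (auto simp: linear_iff vec_eq_iff inner_add_right)
  ultimately show ?thesis by (simp add: orthogonal_transformation norm_eq)
qed

locale sym_bilinear_form =
  fixes B :: "real^'n \<Rightarrow> real^'n \<Rightarrow> real"
  assumes bounded: "bounded_bilinear B" and sym: "B x y = B y x"
begin

sublocale b: bounded_bilinear B by (rule bounded)

text \<open>In matrix terms, an orthonormal eigenset is an orthonormal family of eigenvectors of the
  symmetric matrix of \<open>B\<close>.\<close>

definition orthonormal_eigenset :: "(real^'n) set \<Rightarrow> bool" where
  "orthonormal_eigenset S \<longleftrightarrow> finite S \<and> (\<forall>b\<in>S. norm b = 1) \<and> pairwise orthogonal S \<and>
     (\<forall>b\<in>S. \<forall>b'\<in>S. b \<noteq> b' \<longrightarrow> B b b' = 0) \<and>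
     (\<forall>b\<in>S. \<forall>x. (\<forall>b'\<in>S. orthogonal b' x) \<longrightarrow> B b x = 0)"

lemma quadratic_expand: "B (e + t *\<^sub>R w) (e + t *\<^sub>R w) = B e e + 2 * t * B e w + t^2 * B w w"
  by (simp add: b.add_left b.add_right b.scaleR_left b.scaleR_right sym[of w e]
      power2_eq_square algebra_simps)

lemma quadratic_max_orthogonal:
  assumes max: "\<And>z. z \<in> W \<Longrightarrow> B z z \<le> B e e * (norm z)^2" and W: "subspace W"
    and e: "e \<in> W" "norm e = 1" and w: "w \<in> W" "orthogonal e w"
  shows "B e w = 0"
proof (rule ccontr)
  assume bne: "B e w \<noteq> 0"
  define C where "C = B e e * (norm w)^2 - B w w"
  have ineq: "2 * t * B e w \<le> t^2 * C" for t
  proof -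
    have "(norm (e + t *\<^sub>R w))^2 = (e + t *\<^sub>R w) \<bullet> (e + t *\<^sub>R w)"
      by (rule power2_norm_eq_inner)
    also have "\<dots> = e \<bullet> e + 2 * t * (e \<bullet> w) + t^2 * (w \<bullet> w)"
      by (simp add: inner_add_left inner_add_right inner_commute algebra_simps power2_eq_square)
    also have "\<dots> = 1 + t^2 * (norm w)^2" using e w by (simp add: orthogonal_def dot_square_norm)
    finally have "(norm (e + t *\<^sub>R w))^2 = 1 + t^2 * (norm w)^2" .
    moreover have "B (e + t *\<^sub>R w) (e + t *\<^sub>R w) \<le> B e e * (norm (e + t *\<^sub>R w))^2"
      using max W e w by (simp add: subspace_add subspace_scale)
    ultimately show ?thesis using quadratic_expand[of e t w] by (simp add: C_def algebra_simps)
  qed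
  define a where "a = \<bar>C\<bar> + 1"
  have a: "a > 0" by (simp add: a_def)
  \<comment> \<open>Test the inequality at \<open>t = B e w / a\<close>.\<close>
  have "2 * (B e w)^2 * a = 2 * (B e w / a) * B e w * a^2"
    using a by (simp add: power2_eq_square field_simps)
  also have "\<dots> \<le> (B e w / a)^2 * C * a^2"
    using mult_right_mono[OF ineq[of "B e w / a"], of "a^2"] by simp
  also have "\<dots> = (B e w)^2 * C" using a by (simp add: power2_eq_square field_simps)
  finally have "2 * a \<le> C" using bne by (simp add: mult.commute)
  then show False by (simp add: a_def abs_if split: if_splits)
qed

lemma orthonormal_eigenset_extend:
  assumes S: "orthonormal_eigenset S" and card: "card S < CARD('n)"
  obtains e where "e \<notin> S" "orthonormal_eigenset (insert e S)"
proof -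
  define W where "W = {z. \<forall>b\<in>S. orthogonal b z}"
  have W: "subspace W" unfolding W_def by (rule subspace_orthogonal_to_vectors)
  have fin: "finite S" using S by (simp add: orthonormal_eigenset_def)
  have "dim S < DIM(real^'n)" using dim_le_card[OF span_superset fin] card by simp
  then obtain x where "x \<noteq> 0" "\<And>y. y \<in> span S \<Longrightarrow> orthogonal x y"
    using orthogonal_to_subspace_exists by blast
  then have "x \<in> W" using span_base by (auto simp: W_def orthogonal_commute)
  then have "(1 / norm x) *\<^sub>R x \<in> W \<inter> sphere 0 1"
    using \<open>x \<noteq> 0\<close> W by (simp add: subspace_scale)
  then have ne: "W \<inter> sphere 0 1 \<noteq> {}" by blast
  have "compact (W \<inter> sphere 0 1)"
    using W by (intro closed_Int_compact closed_subspace compact_sphere)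
  moreover have "continuous_on (W \<inter> sphere 0 1) (\<lambda>z. B z z)"
    by (intro b.continuous_on continuous_on_id)
  ultimately obtain e where eK: "e \<in> W \<inter> sphere 0 1" and emax: "\<forall>z\<in>W \<inter> sphere 0 1. B z z \<le> B e e"
    using continuous_attains_sup[OF _ ne] by blast
  have eW: "e \<in> W" and en: "norm e = 1" using eK by auto
  have maxW: "B z z \<le> B e e * (norm z)^2" if "z \<in> W" for z
  proof (cases "z = 0")
    case False
    then have "(1 / norm z) *\<^sub>R z \<in> W \<inter> sphere 0 1" using W that by (simp add: subspace_scale)
    then have "B ((1 / norm z) *\<^sub>R z) ((1 / norm z) *\<^sub>R z) \<le> B e e" using emax by blast
    then have "B z z / (norm z)^2 \<le> B e e"
      by (simp add: b.scaleR_left b.scaleR_right power2_eq_square)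
    then show ?thesis using False by (simp add: divide_le_eq)
  qed (simp add: b.zero_left)
  have "e \<notin> S"
    using eW en by (auto simp: W_def orthogonal_def)
  moreover have "orthonormal_eigenset (insert e S)"
    using S eW en quadratic_max_orthogonal[OF maxW W eW en]
    unfolding orthonormal_eigenset_def pairwise_insert W_def
    by (auto simp: orthogonal_commute sym)
  ultimately show ?thesis using that by blast
qed

lemma orthonormal_eigenset_exists: "k \<le> CARD('n) \<Longrightarrow> \<exists>S. orthonormal_eigenset S \<and> card S = k"
proof (induction k)
  case 0
  show ?case by (rule exI[of _ "{}"]) (simp add: orthonormal_eigenset_def)
next
  case (Suc k)
  then obtain S where S: "orthonormal_eigenset S" "card S = k" by auto
  with Suc.prems obtain e where "e \<notin> S" "orthonormal_eigenset (insert e S)"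
    using orthonormal_eigenset_extend by (metis Suc_le_lessD)
  then show ?case using S by (intro exI[of _ "insert e S"]) (auto simp: orthonormal_eigenset_def)
qed

lemma orthonormal_eigenset_expansion:
  assumes S: "orthonormal_eigenset S" and card: "card S = CARD('n)"
  shows "(\<Sum>b\<in>S. (y \<bullet> b) *\<^sub>R b) = y" and "B y y = (\<Sum>b\<in>S. (y \<bullet> b)^2 * B b b)"
proof -
  have fin: "finite S" and nS: "\<And>b. b \<in> S \<Longrightarrow> norm b = 1" and po: "pairwise orthogonal S"
    and Bo: "\<And>b b'. b \<in> S \<Longrightarrow> b' \<in> S \<Longrightarrow> b \<noteq> b' \<Longrightarrow> B b b' = 0"
    using S by (auto simp: orthonormal_eigenset_def)
  have "independent S" using pairwise_orthogonal_independent[OF po] nS by force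
  then have "span S = UNIV" using dim_eq_card_independent card dim_eq_full by (metis DIM_cart DIM_real mult.right_neutral)
  then show ex: "(\<Sum>b\<in>S. (y \<bullet> b) *\<^sub>R b) = y" for y
    using orthonormal_basis_expand[OF po nS _ fin] by auto
  have "B y y = (\<Sum>b\<in>S. \<Sum>b'\<in>S. (y \<bullet> b) * (y \<bullet> b') * B b b')"
    by (subst (1 2) ex[symmetric])
      (simp add: b.sum_left b.sum_right b.scaleR_left b.scaleR_right sum_distrib_left mult_ac,
       subst sum.swap, simp add: sym mult_ac)
  also have "\<dots> = (\<Sum>b\<in>S. (y \<bullet> b)^2 * B b b)"
  proof (rule sum.cong[OF refl])
    fix b assume b: "b \<in> S"
    have "(\<Sum>b'\<in>S. (y \<bullet> b) * (y \<bullet> b') * B b b') = (\<Sum>b'\<in>S. if b = b' then (y \<bullet> b)^2 * B b b else 0)"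
      by (rule sum.cong[OF refl]) (auto simp: Bo b power2_eq_square)
    then show "(\<Sum>b'\<in>S. (y \<bullet> b) * (y \<bullet> b') * B b b') = (y \<bullet> b)^2 * B b b"
      using fin b by simp
  qed
  finally show "B y y = (\<Sum>b\<in>S. (y \<bullet> b)^2 * B b b)" .
qed

lemma diagonalize:
  obtains Q :: "real^'n \<Rightarrow> real^'n" and lam :: "'n \<Rightarrow> real"
  where "orthogonal_transformation Q" "\<forall>y. B y y = (\<Sum>k\<in>UNIV. lam k * (Q y $ k)^2)"
    and "\<forall>k. \<exists>v. norm v = 1 \<and> lam k = B v v"
    and "(\<Sum>k\<in>UNIV. lam k) = (\<Sum>i\<in>UNIV. B (axis i 1) (axis i 1))"
proof -
  obtain S where S: "orthonormal_eigenset S" and card: "card S = CARD('n)"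
    using orthonormal_eigenset_exists by blast
  have fin: "finite S" and nS: "\<And>b. b \<in> S \<Longrightarrow> norm b = 1"
    using S by (auto simp: orthonormal_eigenset_def)
  obtain \<sigma> :: "'n \<Rightarrow> real^'n" where bij: "bij_betw \<sigma> UNIV S"
    using finite_same_card_bij[of "UNIV :: 'n set" S] fin card by auto
  have reindex: "(\<Sum>k\<in>UNIV. f (\<sigma> k)) = (\<Sum>b\<in>S. f b)" for f :: "real^'n \<Rightarrow> real"
    using sum.reindex_bij_betw[OF bij] .
  have \<sigma>S: "\<sigma> k \<in> S" for k using bij by (auto simp: bij_betw_def)
  define Q where "Q = (\<lambda>y::real^'n. \<chi> k. \<sigma> k \<bullet> y)"
  define lam where "lam = (\<lambda>k. B (\<sigma> k) (\<sigma> k))"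
  have Qk: "Q y $ k = \<sigma> k \<bullet> y" for y k by (simp add: Q_def)
  have "orthogonal_transformation Q"
    unfolding Q_def by (rule coordinates_orthogonal_transformation[OF bij orthonormal_eigenset_expansion(1)[OF S card]])
  moreover have sp: "B y y = (\<Sum>k\<in>UNIV. lam k * (Q y $ k)^2)" for y
    using reindex[of "\<lambda>b. B b b * (b \<bullet> y)^2"] orthonormal_eigenset_expansion(2)[OF S card, of y]
    by (simp add: lam_def Qk inner_commute mult.commute)
  moreover have "\<exists>v. norm v = 1 \<and> lam k = B v v" for k using nS[OF \<sigma>S] by (auto simp: lam_def)
  moreover have "(\<Sum>k\<in>UNIV. lam k) = (\<Sum>i\<in>UNIV. B (axis i 1) (axis i 1))"
  proof -
    have "(\<Sum>i\<in>UNIV. B (axis i 1) (axis i 1)) = (\<Sum>k\<in>UNIV. lam k * (\<Sum>i\<in>UNIV. (\<sigma> k $ i)^2))"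
      by (simp add: sp Qk inner_axis sum_distrib_left) (rule sum.swap)
    also have "\<dots> = (\<Sum>k\<in>UNIV. lam k)"
    proof -
      have "(\<Sum>i\<in>UNIV. (\<sigma> k $ i)^2) = \<sigma> k \<bullet> \<sigma> k" for k by (simp add: inner_vec_def power2_eq_square)
      then show ?thesis using nS[OF \<sigma>S] by (simp add: dot_square_norm)
    qed
    finally show ?thesis by simp
  qed
  ultimately show ?thesis using that by blast
qed

lemma diagonal_coordinates:
  assumes pos: "\<forall>v. v \<noteq> 0 \<longrightarrow> 0 < B v v" and tr: "(\<Sum>i\<in>UNIV. B (axis i 1) (axis i 1)) = 1/2"
  obtains Q :: "real^'n \<Rightarrow> real^'n" and a :: "'n \<Rightarrow> real"
  where "orthogonal_transformation Q" "\<forall>i. a i > 0" "(\<Sum>i\<in>UNIV. a i) = real CARD('n)"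
    "\<forall>x. (\<Sum>i\<in>UNIV. a i * (Q x $ i)^2) = 2 * real CARD('n) * B x x"
proof -
  obtain Q :: "real^'n \<Rightarrow> real^'n" and lam :: "'n \<Rightarrow> real"
    where Q: "orthogonal_transformation Q" "\<forall>y. B y y = (\<Sum>k\<in>UNIV. lam k * (Q y $ k)^2)"
    and lam: "\<forall>k. \<exists>v. norm v = 1 \<and> lam k = B v v"
    and trlam: "(\<Sum>k\<in>UNIV. lam k) = (\<Sum>i\<in>UNIV. B (axis i 1) (axis i 1))"
    by (rule diagonalize)
  define a where "a = (\<lambda>k. 2 * real CARD('n) * lam k)"
  have "a k > 0" for k
  proof -
    obtain v where v: "norm v = 1" "lam k = B v v" using lam by blast
    then have "v \<noteq> 0" by auto
    then have "0 < lam k" using pos v by simp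
    then show ?thesis by (simp add: a_def)
  qed
  moreover have "(\<Sum>i\<in>UNIV. a i) = real CARD('n)"
    using trlam tr by (simp add: a_def sum_distrib_left[symmetric])
  moreover have "\<forall>x. (\<Sum>i\<in>UNIV. a i * (Q x $ i)^2) = 2 * real CARD('n) * B x x"
    by (simp add: Q(2) a_def sum_distrib_left mult.assoc)
  ultimately show ?thesis using that Q(1) by blast
qed

lemma C2_derivs_quadratic:
  "C2_derivs U (\<lambda>x. B (x - x0) (x - x0)) (\<lambda>x k. 2 * B (x - x0) k) (\<lambda>x k w. 2 * B k w)"
  unfolding C2_derivs_def
proof (intro conjI ballI allI)
  fix x w
  have d: "((\<lambda>x. x - x0) has_derivative (\<lambda>h. h)) (at x)"
    by (auto intro!: derivative_eq_intros)
  from b.FDERIV[OF d d]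
  show "((\<lambda>x. B (x - x0) (x - x0)) has_derivative (\<lambda>k. 2 * B (x - x0) k)) (at x)"
    by (simp add: sym[of _ "x - x0"])
  from has_derivative_mult_right[OF b.FDERIV[OF d has_derivative_const[of w]], of 2]
  show "((\<lambda>z. 2 * B (z - x0) w) has_derivative (\<lambda>k. 2 * B k w)) (at x)"
    by (simp add: b.zero_right)
qed simp

lemma ray_exit_level:
  assumes \<Omega>: "open \<Omega>" "bounded \<Omega>" and x0: "x0 \<in> \<Omega>"
    and fr: "\<forall>p\<in>frontier \<Omega>. B (p - x0) (p - x0) = M" and v: "v \<noteq> 0"
  obtains r where "r > 0" "B v v * r^2 = M" "x0 + r *\<^sub>R v \<notin> \<Omega>"
    "\<And>e. 0 \<le> e \<Longrightarrow> e < r \<Longrightarrow> x0 + e *\<^sub>R v \<in> \<Omega>"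
proof -
  obtain r where r: "0 < r" "x0 + r *\<^sub>R v \<in> frontier \<Omega>"
    "\<And>e. 0 \<le> e \<Longrightarrow> e < r \<Longrightarrow> x0 + e *\<^sub>R v \<in> interior \<Omega>"
    using ray_to_frontier[OF \<Omega>(2) _ v] x0 \<Omega>(1) by (metis interior_open)
  have "B (r *\<^sub>R v) (r *\<^sub>R v) = M" using fr r(2) by force
  then have "B v v * r^2 = M" by (simp add: b.scaleR_left b.scaleR_right power2_eq_square mult_ac)
  moreover have "x0 + r *\<^sub>R v \<notin> \<Omega>" using r(2) \<Omega>(1) by (simp add: frontier_def interior_open)
  ultimately show ?thesis using that r \<Omega>(1) by (simp add: interior_open)
qed

lemma frontier_level_imp_pos_def:
  assumes "open \<Omega>" "bounded \<Omega>" "x0 \<in> \<Omega>" "\<forall>p\<in>frontier \<Omega>. B (p - x0) (p - x0) = M"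
    and "M > 0" and "v \<noteq> 0"
  shows "0 < B v v"
  using ray_exit_level[OF assms(1-4,6)] \<open>M > 0\<close> by (metis zero_less_mult_pos2 zero_less_power)

lemma frontier_level_imp_sublevel:
  assumes \<Omega>: "convex \<Omega>" "open \<Omega>" "bounded \<Omega>" and x0: "x0 \<in> \<Omega>"
    and fr: "\<forall>p\<in>frontier \<Omega>. B (p - x0) (p - x0) = M" and M: "M > 0"
  shows "\<Omega> = {x. B (x - x0) (x - x0) < M}"
proof (intro set_eqI)
  fix x
  show "x \<in> \<Omega> \<longleftrightarrow> x \<in> {x. B (x - x0) (x - x0) < M}"
  proof (cases "x = x0")
    case False
    then obtain r where r: "r > 0" "B (x - x0) (x - x0) * r^2 = M" "x0 + r *\<^sub>R (x - x0) \<notin> \<Omega>"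
      "\<And>e. 0 \<le> e \<Longrightarrow> e < r \<Longrightarrow> x0 + e *\<^sub>R (x - x0) \<in> \<Omega>"
      using ray_exit_level[OF \<Omega>(2,3) x0 fr] by (metis right_minus_eq)
    have pos: "0 < B (x - x0) (x - x0)"
      using frontier_level_imp_pos_def[OF \<Omega>(2,3) x0 fr M] False by simp
    have "x \<in> \<Omega> \<longleftrightarrow> 1 < r"
    proof
      assume x: "x \<in> \<Omega>"
      show "1 < r"
      proof (rule ccontr)
        assume "\<not> 1 < r"
        then have "x0 + r *\<^sub>R (x - x0) \<in> \<Omega>"
          using convexD_alt[OF \<Omega>(1) x0 x, of r] r(1) by (simp add: algebra_simps)
        then show False using r(3) by simp
      qed
    qed (use r(4)[of 1] in simp)
    also have "\<dots> \<longleftrightarrow> B (x - x0) (x - x0) * 1 < B (x - x0) (x - x0) * r^2"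
      using pos r(1) one_less_power[of r 2] power_less_imp_less_base[of 1 2 r] by auto
    finally show ?thesis using r(2) by simp
  qed (simp add: x0 M b.zero_left)
qed

lemma quadratic_torsion_ellipsoid:
  fixes \<Omega> :: "(real^'n) set" and u :: "real^'n \<Rightarrow> real"
  assumes \<Omega>: "convex \<Omega>" "open \<Omega>" "bounded \<Omega>" and x0: "x0 \<in> \<Omega>" and M: "0 < M"
    and tr: "(\<Sum>i\<in>UNIV. B (axis i 1) (axis i 1)) = 1/2"
    and uc: "continuous_on (closure \<Omega>) u" and bd: "\<forall>x\<in>frontier \<Omega>. u x = 0"
    and uB: "\<forall>x\<in>\<Omega>. u x = M - B (x - x0) (x - x0)"
  shows "\<exists>(Q :: real^'n \<Rightarrow> real^'n) (c :: real^'n) (a :: 'n \<Rightarrow> real) (R :: real).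
           orthogonal_transformation Q \<and> (\<forall>i. a i > 0) \<and> (\<Sum>i\<in>UNIV. a i) = real CARD('n) \<and>
           \<Omega> = {x. (\<Sum>i\<in>UNIV. a i * (Q (x - c) $ i)^2) < R^2} \<and>
           (\<forall>x\<in>\<Omega>. u x = (R^2 - (\<Sum>i\<in>UNIV. a i * (Q (x - c) $ i)^2)) / (2 * real CARD('n)))"
proof -
  have "\<forall>p\<in>closure \<Omega>. u p = M - B (p - x0) (p - x0)"
    by (rule continuous_on_closure_eq[OF uc _ uB]) (intro continuous_intros b.continuous_on)
  then have fr: "\<forall>p\<in>frontier \<Omega>. B (p - x0) (p - x0) = M" using bd by (auto simp: frontier_def)
  then have "\<forall>v. v \<noteq> 0 \<longrightarrow> 0 < B v v" using frontier_level_imp_pos_def[OF \<Omega>(2,3) x0 _ M] by blast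
  then obtain Q :: "real^'n \<Rightarrow> real^'n" and a :: "'n \<Rightarrow> real"
    where "orthogonal_transformation Q" "\<forall>i. a i > 0" "(\<Sum>i\<in>UNIV. a i) = real CARD('n)"
    and quad: "\<forall>x. (\<Sum>i\<in>UNIV. a i * (Q x $ i)^2) = 2 * real CARD('n) * B x x"
    by (rule diagonal_coordinates[OF _ tr])
  moreover have "\<Omega> = {x. (\<Sum>i\<in>UNIV. a i * (Q (x - x0) $ i)^2) < (sqrt (2 * real CARD('n) * M))^2}"
    using frontier_level_imp_sublevel[OF \<Omega> x0 fr M] M by (simp add: quad)
  moreover have "\<forall>x\<in>\<Omega>. u x = ((sqrt (2 * real CARD('n) * M))^2 - (\<Sum>i\<in>UNIV. a i * (Q (x - x0) $ i)^2))
      / (2 * real CARD('n))"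
    using uB M by (simp add: quad mult.assoc right_diff_distrib[symmetric])
  ultimately show ?thesis by blast
qed

end

section \<open>The torsion function\<close>

lemma sym_bilinear_form_neg_hessian:
  fixes L :: "(real^'n) \<Rightarrow>\<^sub>L ((real^'n) \<Rightarrow>\<^sub>L real)"
  shows "sym_bilinear_form (\<lambda>x y. - (L x y + L y x) / 4)"
proof (rule sym_bilinear_form.intro)
  have "bilinear (\<lambda>x y. - (L x y + L y x) / 4)"
    unfolding bilinear_def by (auto intro!: linearI simp: blinfun.bilinear_simps field_simps)
  then show "bounded_bilinear (\<lambda>x y. - (L x y + L y x) / 4)"
    by (simp add: bilinear_conv_bounded_bilinear)
qed (simp add: add.commute)

lemma convex_sqrt_gap_hessian_bound:
  assumes c: "C2_derivs U f Df D2f" and U: "open U" "convex U" and x0: "x0 \<in> U" and x: "x \<in> U"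
    and max: "\<forall>y\<in>U. f y \<le> f x0" and cvx: "convex_on U (\<lambda>y. sqrt (f x0 - f y))"
  shows "- D2f x0 (x - x0) (x - x0) / 2 \<le> f x0 - f x"
proof -
  have Df: "Df x0 = (\<lambda>v. 0)"
    using differential_zero_maxmin[OF x0 U(1)] c x0 max by (auto simp: C2_derivs_def)
  have seg: "x0 + t *\<^sub>R (x - x0) = (1 - t) *\<^sub>R x0 + t *\<^sub>R x" for t
    by (simp add: algebra_simps)
  have "- (f x0 - f x) \<le> D2f x0 (x - x0) (x - x0) / 2"
  proof (rule C2_derivs_second_deriv_lower[OF c x0 zero_less_one])
    show "x0 + t *\<^sub>R (x - x0) \<in> U" if "0 \<le> t" "t \<le> 1" for t
      unfolding seg using convexD_alt[OF U(2) x0 x that] .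
    fix t :: real assume t: "0 < t" "t \<le> 1"
    have inU: "x0 + t *\<^sub>R (x - x0) \<in> U" using convexD_alt[OF U(2) x0 x] t by (simp add: seg)
    \<comment> \<open>The convex function \<open>\<surd>(f x0 - f)\<close> vanishes at \<open>x0\<close>, so it grows at most linearly along the ray.\<close>
    have "sqrt (f x0 - f (x0 + t *\<^sub>R (x - x0))) \<le> t * sqrt (f x0 - f x)"
      using convex_onD[OF cvx, of t x0 x] t x0 x by (simp add: seg)
    then have "f x0 - f (x0 + t *\<^sub>R (x - x0)) \<le> (t * sqrt (f x0 - f x))^2"
      using max inU by (metis diff_ge_0_iff_ge real_sqrt_ge_zero real_sqrt_pow2 power_mono)
    also have "\<dots> = t^2 * (f x0 - f x)" using max x by (simp add: power_mult_distrib)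
    finally show "t^2 * (- (f x0 - f x)) \<le> f (x0 + t *\<^sub>R (x - x0)) - f x0 - t * Df x0 (x - x0)"
      by (simp add: Df algebra_simps)
  qed
  then show ?thesis by simp
qed

lemma torsion_max_interior:
  fixes u :: "real^'n \<Rightarrow> real"
  assumes c: "C2_derivs \<Omega> u Du D2u" and \<Omega>: "open \<Omega>" "bounded \<Omega>" "\<Omega> \<noteq> {}"
    and uc: "continuous_on (closure \<Omega>) u" and lap: "\<forall>x\<in>\<Omega>. hess_trace D2u x = -1"
    and bd: "\<forall>x\<in>frontier \<Omega>. u x = 0"
  obtains x0 where "x0 \<in> \<Omega>" "0 < u x0" "\<forall>y\<in>closure \<Omega>. u y \<le> u x0"
proof -
  have no_min: "\<exists>y\<in>\<Omega>. u y < u z" if "z \<in> \<Omega>" for z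
    using hess_trace_nonneg_at_min[OF c \<Omega>(1) that] lap that by (fastforce simp: not_less)
  have cpt: "compact (closure \<Omega>)" and ne: "closure \<Omega> \<noteq> {}"
    using \<Omega> closure_subset by (auto simp: compact_closure)
  have fr: "x \<in> frontier \<Omega>" if "x \<in> closure \<Omega>" "x \<notin> \<Omega>" for x
    using that \<Omega>(1) by (simp add: frontier_def interior_open)
  obtain zm where zm: "zm \<in> closure \<Omega>" "\<forall>y\<in>closure \<Omega>. u zm \<le> u y"
    using continuous_attains_inf[OF cpt ne uc] by blast
  have "zm \<notin> \<Omega>" using no_min zm closure_subset by (meson not_le subsetD)
  then have nonneg: "\<forall>y\<in>closure \<Omega>. 0 \<le> u y" using zm fr bd by fastforce
  obtain x0 where x0: "x0 \<in> closure \<Omega>" "\<forall>y\<in>closure \<Omega>. u y \<le> u x0"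
    using continuous_attains_sup[OF cpt ne uc] by blast
  obtain z where "z \<in> \<Omega>" using \<Omega>(3) by blast
  then obtain y where "y \<in> \<Omega>" "u y < u z" using no_min by blast
  moreover have "0 \<le> u y" "u z \<le> u x0" using nonneg x0 closure_subset \<open>y \<in> \<Omega>\<close> \<open>z \<in> \<Omega>\<close> by auto
  ultimately have pos: "0 < u x0" by linarith
  then have "x0 \<in> \<Omega>" using fr[OF x0(1)] bd by force
  then show ?thesis using that pos x0 by blast
qed

lemma torsion_sqrt_convex_eq_quadratic:
  fixes u :: "real^'n \<Rightarrow> real" and D2u :: "real^'n \<Rightarrow> ((real^'n) \<Rightarrow>\<^sub>L ((real^'n) \<Rightarrow>\<^sub>L real))"
  assumes c: "C2_derivs \<Omega> u Du (\<lambda>y k v. D2u y k v)"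
    and \<Omega>: "open \<Omega>" "bounded \<Omega>" "convex \<Omega>" "\<Omega> \<noteq> {}"
    and uc: "continuous_on (closure \<Omega>) u" and lap: "\<forall>x\<in>\<Omega>. hess_trace (\<lambda>y k v. D2u y k v) x = -1"
    and bd: "\<forall>x\<in>frontier \<Omega>. u x = 0" and M: "M = Sup (u ` closure \<Omega>)"
    and cvx: "convex_on \<Omega> (\<lambda>x. sqrt (M - u x))"
  obtains x0 B where "x0 \<in> \<Omega>" "0 < M" "sym_bilinear_form B"
    "(\<Sum>i\<in>UNIV. B (axis i 1) (axis i 1)) = 1/2" "\<forall>x\<in>\<Omega>. u x = M - B (x - x0) (x - x0)"
proof -
  obtain x0 where x0: "x0 \<in> \<Omega>" "0 < u x0" and max: "\<forall>y\<in>closure \<Omega>. u y \<le> u x0"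
    using torsion_max_interior[OF c \<Omega>(1,2,4) uc lap bd] by blast
  have "M = u x0" unfolding M using x0 max closure_subset by (intro cSup_eq_maximum) auto
  \<comment> \<open>Symmetrised, since \<open>D2u x0\<close> is not known to be symmetric; \<open>B v v = - D2u x0 v v / 2\<close>.\<close>
  define B where "B = (\<lambda>x y. - (D2u x0 x y + D2u x0 y x) / 4)"
  interpret sym_bilinear_form B unfolding B_def by (rule sym_bilinear_form_neg_hessian)
  define h where "h = (\<lambda>x. (M - B (x - x0) (x - x0)) - u x)"
  have "(\<Sum>i\<in>UNIV. D2u x0 (axis i 1) (axis i 1)) = -1" using lap x0 by (simp add: hess_trace_def)
  then have tr: "(\<Sum>i\<in>UNIV. B (axis i 1) (axis i 1)) = 1/2"
    by (simp add: B_def sum_negf sum_divide_distrib[symmetric])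
  have ch: "C2_derivs \<Omega> h (\<lambda>y k. (0 - 2 * B (y - x0) k) - Du y k) (\<lambda>y k w. (0 - 2 * B k w) - D2u y k w)"
    unfolding h_def by (intro C2_derivs_diff C2_derivs_const C2_derivs_quadratic c)
  have harm: "\<forall>x\<in>\<Omega>. hess_trace (\<lambda>y k w. (0 - 2 * B k w) - D2u y k w) x \<le> 0"
    using lap tr by (simp add: hess_trace_def sum_subtractf sum_negf sum_distrib_left[symmetric])
  have nonneg: "\<forall>x\<in>\<Omega>. 0 \<le> h x"
  proof
    fix x assume x: "x \<in> \<Omega>"
    have "\<forall>y\<in>\<Omega>. u y \<le> u x0" using max closure_subset by blast
    moreover have "convex_on \<Omega> (\<lambda>y. sqrt (u x0 - u y))" using cvx \<open>M = u x0\<close> by simp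
    ultimately have "- D2u x0 (x - x0) (x - x0) / 2 \<le> u x0 - u x"
      using convex_sqrt_gap_hessian_bound[OF c \<Omega>(1,3) x0(1) x] by simp
    then show "0 \<le> h x" by (simp add: h_def B_def \<open>M = u x0\<close>)
  qed
  have "h x0 = 0" by (simp add: h_def b.zero_left \<open>M = u x0\<close>)
  with superharmonic_strong_min_principle[OF ch \<Omega>(1) convex_connected[OF \<Omega>(3)] harm nonneg x0(1)]
  have "\<forall>x\<in>\<Omega>. u x = M - B (x - x0) (x - x0)" by (simp add: h_def)
  moreover have "0 < M" using x0(2) \<open>M = u x0\<close> by simp
  ultimately show ?thesis using that[OF x0(1) _ sym_bilinear_form_axioms tr] by blast
qed

theorem theorem1p4:
  fixes \<Omega> :: "(real^'n) set" and u :: "real^'n \<Rightarrow> real" and M :: real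
  assumes "CARD('n) \<ge> 2"
    and "bounded \<Omega>" and "open \<Omega>"
    and "C2_on \<Omega> u" and "continuous_on (closure \<Omega>) u"
    and "\<forall>x\<in>\<Omega>. laplacian u x = -1"
    and "\<forall>x\<in>frontier \<Omega>. u x = 0"
    and "M = Sup (u ` closure \<Omega>)"
    and "convex \<Omega>"
    and "convex_on \<Omega> (\<lambda>x. sqrt (M - u x))"
  shows "\<exists>(Q :: real^'n \<Rightarrow> real^'n) (c :: real^'n) (a :: 'n \<Rightarrow> real) (R :: real).
           orthogonal_transformation Q \<and> (\<forall>i. a i > 0) \<and> (\<Sum>i\<in>UNIV. a i) = real CARD('n) \<and>
           \<Omega> = {x. (\<Sum>i\<in>UNIV. a i * (Q (x - c) $ i)^2) < R^2} \<and>
           (\<forall>x\<in>\<Omega>. u x = (R^2 - (\<Sum>i\<in>UNIV. a i * (Q (x - c) $ i)^2)) / (2 * real CARD('n)))"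
proof (cases "\<Omega> = {}")
  case True
  then show ?thesis
    by (intro exI[of _ id] exI[of _ 0] exI[of _ "\<lambda>_. 1"] exI[of _ 0])
      (auto simp: not_less id_def intro!: sum_nonneg)
next
  case False
  obtain Du :: "real^'n \<Rightarrow> ((real^'n) \<Rightarrow>\<^sub>L real)"
    and D2u :: "real^'n \<Rightarrow> ((real^'n) \<Rightarrow>\<^sub>L ((real^'n) \<Rightarrow>\<^sub>L real))"
    where c: "C2_derivs \<Omega> u (\<lambda>y. Du y) (\<lambda>y k v. D2u y k v)"
      and d1: "\<forall>x\<in>\<Omega>. (u has_derivative blinfun_apply (Du x)) (at x)"
      and d2: "\<forall>x\<in>\<Omega>. (Du has_derivative blinfun_apply (D2u x)) (at x)"
    using C2_on_imp_C2_derivs[OF assms(4)] by metis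
  have "\<forall>x\<in>\<Omega>. hess_trace (\<lambda>y k v. D2u y k v) x = -1"
    using laplacian_eq_hess_trace[OF assms(3) _ d1 d2] assms(6) by simp
  then obtain x0 B where "x0 \<in> \<Omega>" "0 < M" "sym_bilinear_form B"
    "(\<Sum>i\<in>UNIV. B (axis i 1) (axis i 1)) = 1/2" "\<forall>x\<in>\<Omega>. u x = M - B (x - x0) (x - x0)"
    using torsion_sqrt_convex_eq_quadratic[OF c assms(3,2,9) False assms(5) _ assms(7,8,10)] by blast
  then show ?thesis
    using sym_bilinear_form.quadratic_torsion_ellipsoid[OF _ assms(9,3,2) _ _ _ assms(5,7)] by blast
qed

end
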